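(* Let $k$ be a field of characteristic $0$ and $V$ a $k$-module. The free commutative trialgebra on $V$ is the module $\bar S(V)\otimes S(V)$ (with $V\hookrightarrow\bar S(V)\otimes S(V)$, $v\mapsto v\otimes1$) equipped with the operations $$(x_1\cdots x_k\otimes y_1\cdots y_l)*(x'_1\cdots x'_m\otimes y'_1\cdots y'_n)=x_1\cdots x_k\otimes y_1\cdots y_l\,x'_1\cdots x'_m\,y'_1\cdots y'_n,$$ $$(x_1\cdots x_k\otimes y_1\cdots y_l)\bullet(x'_1\cdots x'_m\otimes y'_1\cdots y'_n)=x_1\cdots x_k\,x'_1\cdots x'_m\otimes y_1\cdots y_l\,y'_1\cdots y'_n.$$
   Context: $S(V)$ denotes the symmetric algebra on $V$ and $\bar S(V)=\bigoplus_{n\ge1}S^n(V)$ its augmentation ideal. A commutative trialgebra is a $k$-module $A$ with two binary operations $*$ and $\bullet$ such that $(x*y)*z=x*(y*z)=x*(z*y)$; $x\bullet y=y\bullet x$, $(x\bullet y)\bullet z=x\bullet(y\bullet z)$; and $x*(y\bullet z)=x*(y*z)$, $(x\bullet y)*z=x\bullet(y*z)$. "Free" means: for every commutative trialgebra $T$ and linear map $f:V\to T$ there is a unique morphism of commutative trialgebras extending $f$. *)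

theory Defs
  imports Main "HOL-Library.Poly_Mapping"
begin

definition bilinear_on ::
  "('k::comm_ring_1 \<Rightarrow> 'a::ab_group_add \<Rightarrow> 'a) \<Rightarrow> 'a set \<Rightarrow> ('a \<Rightarrow> 'a \<Rightarrow> 'a) \<Rightarrow> bool" where
  "bilinear_on s C m \<longleftrightarrow>
     (\<forall>x\<in>C. \<forall>y\<in>C. \<forall>z\<in>C. m (x + y) z = m x z + m y z \<and> m x (y + z) = m x y + m x z) \<and>
     (\<forall>c. \<forall>x\<in>C. \<forall>y\<in>C. m (s c x) y = s c (m x y) \<and> m x (s c y) = s c (m x y))"

definition comm_trialgebra ::
  "('k::comm_ring_1 \<Rightarrow> 'a::ab_group_add \<Rightarrow> 'a) \<Rightarrow> 'a set \<Rightarrow> ('a \<Rightarrow> 'a \<Rightarrow> 'a) \<Rightarrow> ('a \<Rightarrow> 'a \<Rightarrow> 'a) \<Rightarrow> bool" where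
  "comm_trialgebra s C m d \<longleftrightarrow>
     (\<forall>a b. \<forall>x\<in>C. \<forall>y\<in>C. s a (x + y) = s a x + s a y \<and> s (a + b) x = s a x + s b x \<and>
        s a (s b x) = s (a * b) x \<and> s 1 x = x) \<and>
     0 \<in> C \<and> (\<forall>x\<in>C. \<forall>y\<in>C. x + y \<in> C) \<and> (\<forall>c. \<forall>x\<in>C. s c x \<in> C) \<and>
     (\<forall>x\<in>C. \<forall>y\<in>C. m x y \<in> C \<and> d x y \<in> C) \<and>
     bilinear_on s C m \<and> bilinear_on s C d \<and>
     (\<forall>x\<in>C. \<forall>y\<in>C. \<forall>z\<in>C.
        m (m x y) z = m x (m y z) \<and> m x (m y z) = m x (m z y) \<and>
        d x y = d y x \<and> d (d x y) z = d x (d y z) \<and>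
        m x (d y z) = m x (m y z) \<and> m (d x y) z = d x (m y z))"

definition trialgebra_hom ::
  "('k::comm_ring_1 \<Rightarrow> 'a::ab_group_add \<Rightarrow> 'a) \<Rightarrow> 'a set \<Rightarrow> ('a \<Rightarrow> 'a \<Rightarrow> 'a) \<Rightarrow> ('a \<Rightarrow> 'a \<Rightarrow> 'a) \<Rightarrow>
   ('k \<Rightarrow> 'b::ab_group_add \<Rightarrow> 'b) \<Rightarrow> 'b set \<Rightarrow> ('b \<Rightarrow> 'b \<Rightarrow> 'b) \<Rightarrow> ('b \<Rightarrow> 'b \<Rightarrow> 'b) \<Rightarrow>
   ('a \<Rightarrow> 'b) \<Rightarrow> bool" where
  "trialgebra_hom s1 C1 m1 d1 s2 C2 m2 d2 h \<longleftrightarrow>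
     (\<forall>x\<in>C1. h x \<in> C2) \<and>
     (\<forall>x\<in>C1. \<forall>y\<in>C1. h (x + y) = h x + h y) \<and>
     (\<forall>c. \<forall>x\<in>C1. h (s1 c x) = s2 c (h x)) \<and>
     (\<forall>x\<in>C1. \<forall>y\<in>C1. h (m1 x y) = m2 (h x) (h y) \<and> h (d1 x y) = d2 (h x) (h y))"

text \<open>V is the k-vector space with basis 'b, i.e. finitely supported functions 'b \<Rightarrow> k.\<close>

definition smult_pm :: "'k::comm_ring_1 \<Rightarrow> ('i \<Rightarrow>\<^sub>0 'k) \<Rightarrow> ('i \<Rightarrow>\<^sub>0 'k)" where
  "smult_pm c p = Poly_Mapping.map (\<lambda>a. c * a) p"

text \<open>S(V) \<otimes> S(V) is the polynomial ring in two copies of the basis variables: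
a monomial (m, n) stands for  x^m \<otimes> y^n, with x^m, y^n monomials in the basis of V.
Sbar(V) \<otimes> S(V) is spanned by the monomials with m \<noteq> 0 (positive degree in the first factor).\<close>

type_synonym ('b, 'k) tri = "(('b \<Rightarrow>\<^sub>0 nat) \<times> ('b \<Rightarrow>\<^sub>0 nat)) \<Rightarrow>\<^sub>0 'k"

definition tri_carrier :: "('b, 'k::comm_ring_1) tri set" where
  "tri_carrier = {p. \<forall>mn \<in> Poly_Mapping.keys p. fst mn \<noteq> 0}"

definition bilin_ext ::
  "('i \<Rightarrow> 'i \<Rightarrow> 'i) \<Rightarrow> ('i \<Rightarrow>\<^sub>0 'k::comm_ring_1) \<Rightarrow> ('i \<Rightarrow>\<^sub>0 'k) \<Rightarrow> ('i \<Rightarrow>\<^sub>0 'k)" where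
  "bilin_ext f p q = (\<Sum>a\<in>Poly_Mapping.keys p. \<Sum>b\<in>Poly_Mapping.keys q.
       Poly_Mapping.single (f a b) (Poly_Mapping.lookup p a * Poly_Mapping.lookup q b))"

definition tri_star :: "('b, 'k::comm_ring_1) tri \<Rightarrow> ('b, 'k) tri \<Rightarrow> ('b, 'k) tri" where
  "tri_star = bilin_ext (\<lambda>(m, n) (m', n'). (m, n + m' + n'))"

definition tri_bullet :: "('b, 'k::comm_ring_1) tri \<Rightarrow> ('b, 'k) tri \<Rightarrow> ('b, 'k) tri" where
  "tri_bullet = bilin_ext (\<lambda>(m, n) (m', n'). (m + m', n + n'))"

definition tri_incl :: "('b \<Rightarrow>\<^sub>0 'k::comm_ring_1) \<Rightarrow> ('b, 'k) tri" where
  "tri_incl v = (\<Sum>b\<in>Poly_Mapping.keys v. Poly_Mapping.single (Poly_Mapping.single b 1, 0) (Poly_Mapping.lookup v b))"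

end

theory Submission
  imports Defs "HOL-Library.Multiset"
begin

text \<open>Both products of the model are bilinear extensions of operations on exponent pairs
  \<open>(a, n)\<close>, which stand for \<open>x\<^sup>a \<otimes> y\<^sup>n\<close> with \<open>a \<noteq> 0\<close>; so each trialgebra axiom
  reduces to an identity between sums of exponents. The monomials are words in the generators:
  \<open>x\<^sup>a \<otimes> 1\<close> is the \<bullet>-product of the generators counted by \<open>a\<close>, and
  \<open>x\<^sup>a \<otimes> y\<^sup>n\<close> arises from it by right \<star>-multiplication with the generators counted
  by \<open>n\<close>. Hence a morphism is determined by its values on the generators. Conversely, in any
  commutative trialgebra the \<bullet>-product is associative and commutative and right
  \<star>-multiplications commute, so these words have well-defined values, which the axioms show to be
  multiplicative for both products; their linear extension is the required morphism.\<close>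

lemma lookup_smult_pm [simp]:
  "Poly_Mapping.lookup (smult_pm c p) k = c * Poly_Mapping.lookup p k"
  by (simp add: smult_pm_def map.rep_eq when_def)

lemma keys_smult_pm_subset: "Poly_Mapping.keys (smult_pm c p) \<subseteq> Poly_Mapping.keys p"
  by (auto simp: in_keys_iff)

lemma smult_pm_single [simp]:
  "smult_pm c (Poly_Mapping.single k a) = Poly_Mapping.single k (c * a)"
  by (rule poly_mapping_eqI) (simp add: lookup_single when_def)

lemma smult_pm_sum: "smult_pm c (sum F I) = (\<Sum>i\<in>I. smult_pm c (F i))"
  by (rule poly_mapping_eqI) (simp add: lookup_sum sum_distrib_left)

lemma single_eq_0_iff [simp]: "Poly_Mapping.single k a = 0 \<longleftrightarrow> a = 0"
  by (metis lookup_single_eq lookup_zero single_zero)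

lemma single_eq_single_iff [simp]:
  "a \<noteq> 0 \<Longrightarrow> Poly_Mapping.single k a = Poly_Mapping.single k' a \<longleftrightarrow> k = k'"
  by (metis lookup_single_eq lookup_single_not_eq)

lemma poly_mapping_nat_add_eq_0_iff: "(a :: 'i \<Rightarrow>\<^sub>0 nat) + b = 0 \<longleftrightarrow> a = 0 \<and> b = 0"
  by (auto simp: poly_mapping_eq_iff fun_eq_iff lookup_add)

lemma poly_mapping_nat_induct [case_names zero add_single]:
  fixes P :: "('i \<Rightarrow>\<^sub>0 nat) \<Rightarrow> bool"
  assumes zero: "P 0" and add_single: "\<And>n i. P n \<Longrightarrow> P (n + Poly_Mapping.single i 1)"
  shows "P n"
proof (induction n rule: update_induct)
  case const
  show ?case by (rule zero)
next
  case (update n i k)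
  have "P (n + Poly_Mapping.single i j)" for j
  proof (induction j)
    case (Suc j)
    have "Poly_Mapping.single i (Suc j) = Poly_Mapping.single i j + Poly_Mapping.single i 1"
      by (simp flip: single_add)
    with add_single[OF Suc.IH] show ?case by (simp add: add.assoc)
  qed (simp add: update.IH)
  moreover have "Poly_Mapping.update i k n = n + Poly_Mapping.single i k"
    using update.hyps(1)
    by (intro poly_mapping_eqI) (auto simp: lookup_update lookup_add lookup_single in_keys_iff)
  ultimately show ?case by simp
qed

definition pm_mset :: "('b \<Rightarrow>\<^sub>0 nat) \<Rightarrow> 'b multiset" where
  "pm_mset n = Abs_multiset (Poly_Mapping.lookup n)"

lemma count_pm_mset [simp]: "count (pm_mset n) = Poly_Mapping.lookup n"
  unfolding pm_mset_def by (rule count_Abs_multiset) simp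

lemma pm_mset_add [simp]: "pm_mset (a + b) = pm_mset a + pm_mset b"
  by (rule multiset_eqI) (simp add: lookup_add)

lemma pm_mset_single [simp]: "pm_mset (Poly_Mapping.single b 1) = {#b#}"
  by (rule multiset_eqI) (simp add: lookup_single when_def)

lemma pm_mset_zero [simp]: "pm_mset 0 = {#}"
  by (rule multiset_eqI) simp

lemma pm_mset_eq_empty_iff [simp]: "pm_mset n = {#} \<longleftrightarrow> n = 0"
  by (auto simp: multiset_eq_iff poly_mapping_eq_iff fun_eq_iff)

lemma bilin_ext_eq_sum_superset:
  assumes "finite A" "Poly_Mapping.keys p \<subseteq> A" "finite B" "Poly_Mapping.keys q \<subseteq> B"
  shows "bilin_ext f p q = (\<Sum>a\<in>A. \<Sum>b\<in>B.
           Poly_Mapping.single (f a b) (Poly_Mapping.lookup p a * Poly_Mapping.lookup q b))"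
proof -
  have "bilin_ext f p q = (\<Sum>a\<in>Poly_Mapping.keys p. \<Sum>b\<in>B.
          Poly_Mapping.single (f a b) (Poly_Mapping.lookup p a * Poly_Mapping.lookup q b))"
    unfolding bilin_ext_def
    by (intro sum.cong refl sum.mono_neutral_left) (use assms in \<open>auto simp: in_keys_iff\<close>)
  also have "\<dots> = (\<Sum>a\<in>A. \<Sum>b\<in>B.
          Poly_Mapping.single (f a b) (Poly_Mapping.lookup p a * Poly_Mapping.lookup q b))"
    by (rule sum.mono_neutral_left) (use assms in \<open>auto simp: in_keys_iff\<close>)
  finally show ?thesis .
qed

lemma bilin_ext_add_left: "bilin_ext f (p + p') q = bilin_ext f p q + bilin_ext f p' q"
  by (subst (1 2 3) bilin_ext_eq_sum_superset[where A = "Poly_Mapping.keys p \<union> Poly_Mapping.keys p'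
      \<union> Poly_Mapping.keys (p + p')" and B = "Poly_Mapping.keys q"])
    (auto simp: lookup_add algebra_simps single_add sum.distrib)

lemma bilin_ext_add_right: "bilin_ext f p (q + q') = bilin_ext f p q + bilin_ext f p q'"
  by (subst (1 2 3) bilin_ext_eq_sum_superset[where B = "Poly_Mapping.keys q \<union> Poly_Mapping.keys q'
      \<union> Poly_Mapping.keys (q + q')" and A = "Poly_Mapping.keys p"])
    (auto simp: lookup_add algebra_simps single_add sum.distrib)

lemma bilin_ext_smult_left: "bilin_ext f (smult_pm c p) q = smult_pm c (bilin_ext f p q)"
  by (subst (1 2) bilin_ext_eq_sum_superset[where A = "Poly_Mapping.keys p"
      and B = "Poly_Mapping.keys q"]) (auto simp: keys_smult_pm_subset smult_pm_sum mult.assoc)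

lemma bilin_ext_smult_right: "bilin_ext f p (smult_pm c q) = smult_pm c (bilin_ext f p q)"
  by (subst (1 2) bilin_ext_eq_sum_superset[where A = "Poly_Mapping.keys p"
      and B = "Poly_Mapping.keys q"]) (auto simp: keys_smult_pm_subset smult_pm_sum algebra_simps)

lemma bilinear_on_bilin_ext: "bilinear_on smult_pm A (bilin_ext f)"
  by (simp add: bilinear_on_def bilin_ext_add_left bilin_ext_add_right
      bilin_ext_smult_left bilin_ext_smult_right)

lemma bilin_ext_sum_left: "bilin_ext f (sum F I) q = (\<Sum>i\<in>I. bilin_ext f (F i) q)"
  by (induction I rule: infinite_finite_induct)
    (simp_all add: bilin_ext_add_left bilin_ext_def[of _ 0])

lemma bilin_ext_sum_right: "bilin_ext f p (sum F I) = (\<Sum>i\<in>I. bilin_ext f p (F i))"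
  by (induction I rule: infinite_finite_induct)
    (simp_all add: bilin_ext_add_right bilin_ext_def[of _ _ 0])

lemma bilin_ext_single_left:
  "bilin_ext f (Poly_Mapping.single a c) q
     = (\<Sum>b\<in>Poly_Mapping.keys q. Poly_Mapping.single (f a b) (c * Poly_Mapping.lookup q b))"
  by (subst bilin_ext_eq_sum_superset[where A = "{a}" and B = "Poly_Mapping.keys q"]) auto

lemma bilin_ext_single_right:
  "bilin_ext f p (Poly_Mapping.single b c)
     = (\<Sum>a\<in>Poly_Mapping.keys p. Poly_Mapping.single (f a b) (Poly_Mapping.lookup p a * c))"
  by (subst bilin_ext_eq_sum_superset[where B = "{b}" and A = "Poly_Mapping.keys p"]) auto

lemma bilin_ext_single_single:
  "bilin_ext f (Poly_Mapping.single a c) (Poly_Mapping.single b c')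
     = Poly_Mapping.single (f a b) (c * c')"
  by (subst bilin_ext_eq_sum_superset[where A = "{a}" and B = "{b}"]) auto

lemma bilin_ext_nested_left:
  "bilin_ext f (bilin_ext g p q) r =
     (\<Sum>a\<in>Poly_Mapping.keys p. \<Sum>b\<in>Poly_Mapping.keys q. \<Sum>c\<in>Poly_Mapping.keys r.
        Poly_Mapping.single (f (g a b) c)
          (Poly_Mapping.lookup p a * Poly_Mapping.lookup q b * Poly_Mapping.lookup r c))"
  by (simp add: bilin_ext_def[of g] bilin_ext_sum_left bilin_ext_single_left mult.assoc)

lemma bilin_ext_nested_right:
  "bilin_ext f p (bilin_ext g q r) =
     (\<Sum>a\<in>Poly_Mapping.keys p. \<Sum>b\<in>Poly_Mapping.keys q. \<Sum>c\<in>Poly_Mapping.keys r.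
        Poly_Mapping.single (f a (g b c))
          (Poly_Mapping.lookup p a * Poly_Mapping.lookup q b * Poly_Mapping.lookup r c))"
proof -
  have "bilin_ext f p (bilin_ext g q r) =
     (\<Sum>b\<in>Poly_Mapping.keys q. \<Sum>c\<in>Poly_Mapping.keys r. \<Sum>a\<in>Poly_Mapping.keys p.
        Poly_Mapping.single (f a (g b c))
          (Poly_Mapping.lookup p a * Poly_Mapping.lookup q b * Poly_Mapping.lookup r c))"
    by (simp add: bilin_ext_def[of g] bilin_ext_sum_right bilin_ext_single_right mult.assoc)
  also have "\<dots> =
     (\<Sum>a\<in>Poly_Mapping.keys p. \<Sum>b\<in>Poly_Mapping.keys q. \<Sum>c\<in>Poly_Mapping.keys r.
        Poly_Mapping.single (f a (g b c))
          (Poly_Mapping.lookup p a * Poly_Mapping.lookup q b * Poly_Mapping.lookup r c))"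
    by (subst sum.swap) (simp add: sum.swap[where B = "Poly_Mapping.keys p"])
  finally show ?thesis .
qed

lemma bilin_ext_swap: "bilin_ext f p q = bilin_ext (\<lambda>b a. f a b) q p"
  unfolding bilin_ext_def by (subst sum.swap) (simp add: mult.commute)

lemma bilin_ext_commute:
  assumes "\<And>a b. f a b = f b a"
  shows "bilin_ext f p q = bilin_ext f q p"
proof -
  have "(\<lambda>b a. f a b) = f"
    using assms by (intro ext) blast
  then show ?thesis
    using bilin_ext_swap[of f p q] by simp
qed

lemma bilin_ext_assoc_law:
  assumes "\<And>a b c. f (g a b) c = f' a (g' b c)"
  shows "bilin_ext f (bilin_ext g p q) r = bilin_ext f' p (bilin_ext g' q r)"
  by (simp add: bilin_ext_nested_left bilin_ext_nested_right assms)

lemma bilin_ext_right_law: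
  assumes "\<And>a b c. f a (g b c) = f' a (g' b c)"
  shows "bilin_ext f p (bilin_ext g q r) = bilin_ext f' p (bilin_ext g' q r)"
  by (simp add: bilin_ext_nested_right assms)

lemma keys_bilin_ext_subset:
  "Poly_Mapping.keys (bilin_ext f p q)
     \<subseteq> (\<lambda>(a, b). f a b) ` (Poly_Mapping.keys p \<times> Poly_Mapping.keys q)"
proof -
  have "Poly_Mapping.keys (bilin_ext f p q)
      \<subseteq> (\<Union>a\<in>Poly_Mapping.keys p. \<Union>b\<in>Poly_Mapping.keys q. Poly_Mapping.keys
        (Poly_Mapping.single (f a b) (Poly_Mapping.lookup p a * Poly_Mapping.lookup q b)))"
    unfolding bilin_ext_def by (rule order.trans[OF keys_sum UN_mono[OF subset_refl keys_sum]])
  then show ?thesis by (auto split: if_splits)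
qed

lemma tri_carrier_iff: "p \<in> tri_carrier \<longleftrightarrow> (\<forall>k\<in>Poly_Mapping.keys p. fst k \<noteq> 0)"
  by (simp add: tri_carrier_def)

lemma single_in_tri_carrier: "fst k \<noteq> 0 \<Longrightarrow> Poly_Mapping.single k c \<in> tri_carrier"
  by (simp add: tri_carrier_iff)

lemma add_in_tri_carrier: "p \<in> tri_carrier \<Longrightarrow> q \<in> tri_carrier \<Longrightarrow> p + q \<in> tri_carrier"
  using keys_add[of p q] by (auto simp: tri_carrier_iff)

lemma smult_pm_in_tri_carrier: "p \<in> tri_carrier \<Longrightarrow> smult_pm c p \<in> tri_carrier"
  using keys_smult_pm_subset[of c p] by (auto simp: tri_carrier_iff)

lemma bilin_ext_in_tri_carrier:
  assumes "\<And>a b. fst a \<noteq> 0 \<Longrightarrow> fst b \<noteq> 0 \<Longrightarrow> fst (f a b) \<noteq> 0"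
    and "p \<in> tri_carrier" "q \<in> tri_carrier"
  shows "bilin_ext f p q \<in> tri_carrier"
  unfolding tri_carrier_iff
proof
  fix k
  assume "k \<in> Poly_Mapping.keys (bilin_ext f p q)"
  then obtain a b where "a \<in> Poly_Mapping.keys p" "b \<in> Poly_Mapping.keys q" "k = f a b"
    using keys_bilin_ext_subset[of f p q] by force
  with assms show "fst k \<noteq> 0" by (simp add: tri_carrier_iff)
qed

lemma tri_star_in_tri_carrier:
  "p \<in> tri_carrier \<Longrightarrow> q \<in> tri_carrier \<Longrightarrow> tri_star p q \<in> tri_carrier"
  unfolding tri_star_def by (rule bilin_ext_in_tri_carrier) (simp_all add: split_beta)

lemma tri_bullet_in_tri_carrier:
  "p \<in> tri_carrier \<Longrightarrow> q \<in> tri_carrier \<Longrightarrow> tri_bullet p q \<in> tri_carrier"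
  unfolding tri_bullet_def
  by (rule bilin_ext_in_tri_carrier) (simp_all add: split_beta poly_mapping_nat_add_eq_0_iff)

lemma tri_star_assoc: "tri_star (tri_star x y) z = tri_star x (tri_star y z)"
  unfolding tri_star_def by (rule bilin_ext_assoc_law) (auto simp: add.assoc)

lemma tri_star_right_commute: "tri_star x (tri_star y z) = tri_star x (tri_star z y)"
  unfolding tri_star_def
  by (subst (2) bilin_ext_swap, rule bilin_ext_right_law) (auto simp: ac_simps)

lemma tri_bullet_commute: "tri_bullet x y = tri_bullet y x"
  unfolding tri_bullet_def by (rule bilin_ext_commute) (auto simp: add.commute)

lemma tri_bullet_assoc: "tri_bullet (tri_bullet x y) z = tri_bullet x (tri_bullet y z)"
  unfolding tri_bullet_def by (rule bilin_ext_assoc_law) (auto simp: add.assoc)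

lemma tri_star_tri_bullet_right: "tri_star x (tri_bullet y z) = tri_star x (tri_star y z)"
  unfolding tri_star_def tri_bullet_def by (rule bilin_ext_right_law) (auto simp: ac_simps)

lemma tri_bullet_tri_star_assoc: "tri_star (tri_bullet x y) z = tri_bullet x (tri_star y z)"
  unfolding tri_star_def tri_bullet_def by (rule bilin_ext_assoc_law) (auto simp: ac_simps)

lemma comm_trialgebra_tri:
  "comm_trialgebra (smult_pm :: 'k::comm_ring_1 \<Rightarrow> ('b, 'k) tri \<Rightarrow> ('b, 'k) tri)
     tri_carrier tri_star tri_bullet"
proof -
  have "smult_pm a (x + y) = smult_pm a x + smult_pm a y"
    "smult_pm (a + b) x = smult_pm a x + smult_pm b x"
    "smult_pm a (smult_pm b x) = smult_pm (a * b) x" "smult_pm 1 x = x"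
    for a b :: 'k and x y :: "('b, 'k) tri"
    by (simp_all add: poly_mapping_eq_iff fun_eq_iff lookup_add algebra_simps)
  moreover have "(0 :: ('b, 'k) tri) \<in> tri_carrier"
    by (simp add: tri_carrier_iff)
  moreover have "bilinear_on smult_pm tri_carrier tri_star"
    "bilinear_on smult_pm tri_carrier tri_bullet"
    unfolding tri_star_def tri_bullet_def by (rule bilinear_on_bilin_ext)+
  ultimately show ?thesis
    unfolding comm_trialgebra_def
    by (auto simp: add_in_tri_carrier smult_pm_in_tri_carrier tri_star_in_tri_carrier
        tri_bullet_in_tri_carrier tri_star_assoc tri_star_right_commute tri_bullet_assoc
        tri_star_tri_bullet_right tri_bullet_tri_star_assoc intro: tri_bullet_commute)
qed

abbreviation tri_gen :: "'b \<Rightarrow> ('b, 'k::comm_ring_1) tri" where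
  "tri_gen b \<equiv> Poly_Mapping.single (Poly_Mapping.single b 1, 0) 1"

lemma tri_incl_eq_sum_superset:
  "finite S \<Longrightarrow> Poly_Mapping.keys v \<subseteq> S \<Longrightarrow>
     tri_incl v =
       (\<Sum>b\<in>S. Poly_Mapping.single (Poly_Mapping.single b 1, 0) (Poly_Mapping.lookup v b))"
  unfolding tri_incl_def by (rule sum.mono_neutral_left) (auto simp: in_keys_iff)

lemma tri_incl_add: "tri_incl (u + v) = tri_incl u + tri_incl v"
  by (subst (1 2 3) tri_incl_eq_sum_superset[where S = "Poly_Mapping.keys u \<union> Poly_Mapping.keys v
      \<union> Poly_Mapping.keys (u + v)"]) (auto simp: lookup_add single_add sum.distrib)

lemma tri_incl_smult: "tri_incl (smult_pm c v) = smult_pm c (tri_incl v)"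
  by (subst (1 2) tri_incl_eq_sum_superset[where S = "Poly_Mapping.keys v"])
    (auto simp: keys_smult_pm_subset smult_pm_sum)

lemma tri_incl_single: "tri_incl (Poly_Mapping.single b 1) = tri_gen b"
  by (simp add: tri_incl_def)

lemma lookup_tri_incl:
  "Poly_Mapping.lookup (tri_incl v) (Poly_Mapping.single b 1, 0) = Poly_Mapping.lookup v b"
proof -
  have "Poly_Mapping.lookup (tri_incl v) (Poly_Mapping.single b 1, 0) =
      (\<Sum>b'\<in>Poly_Mapping.keys v. if b' = b then Poly_Mapping.lookup v b' else 0)"
    unfolding tri_incl_def lookup_sum lookup_single
    by (intro sum.cong refl) (auto simp: when_def)
  also have "\<dots> = Poly_Mapping.lookup v b"
    by (auto simp: sum.delta' in_keys_iff)
  finally show ?thesis .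
qed

lemma inj_tri_incl: "inj tri_incl"
proof (rule injI)
  fix u v
  assume "tri_incl u = tri_incl v"
  then show "u = v"
    by (intro poly_mapping_eqI) (metis lookup_tri_incl)
qed

lemma tri_incl_in_tri_carrier: "tri_incl v \<in> tri_carrier"
proof -
  have "Poly_Mapping.keys (tri_incl v) \<subseteq> (\<Union>b\<in>Poly_Mapping.keys v. Poly_Mapping.keys
      (Poly_Mapping.single (Poly_Mapping.single b 1, 0) (Poly_Mapping.lookup v b)))"
    unfolding tri_incl_def by (rule keys_sum)
  then show ?thesis
    by (auto simp: tri_carrier_iff split: if_splits)
qed

subsection \<open>Linear maps and morphisms out of the model\<close>

lemma additive_on_sum:
  fixes H :: "'a::comm_monoid_add \<Rightarrow> 'b::cancel_comm_monoid_add"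
  assumes zero: "0 \<in> A" and add_closed: "\<And>x y. x \<in> A \<Longrightarrow> y \<in> A \<Longrightarrow> x + y \<in> A"
    and add: "\<And>x y. x \<in> A \<Longrightarrow> y \<in> A \<Longrightarrow> H (x + y) = H x + H y"
    and F: "\<And>i. i \<in> I \<Longrightarrow> F i \<in> A"
  shows "sum F I \<in> A \<and> H (sum F I) = (\<Sum>i\<in>I. H (F i))"
proof -
  have "H 0 = H 0 + H 0"
    using add[OF zero zero] by simp
  then have H0: "H 0 = 0"
    by simp
  show ?thesis
    using F by (induction I rule: infinite_finite_induct) (simp_all add: zero H0 add_closed add)
qed

lemma sum_single_lookup:
  "(\<Sum>k\<in>Poly_Mapping.keys p. Poly_Mapping.single k (Poly_Mapping.lookup p k)) = p"
  by (rule poly_mapping_eqI) (auto simp: lookup_sum lookup_single when_def in_keys_iff)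

lemma linear_expansion:
  fixes H :: "('i \<Rightarrow>\<^sub>0 'k::comm_ring_1) \<Rightarrow> 't::ab_group_add"
  assumes zero: "0 \<in> A" and add_closed: "\<And>x y. x \<in> A \<Longrightarrow> y \<in> A \<Longrightarrow> x + y \<in> A"
    and smult_closed: "\<And>c x. x \<in> A \<Longrightarrow> smult_pm c x \<in> A"
    and add: "\<And>x y. x \<in> A \<Longrightarrow> y \<in> A \<Longrightarrow> H (x + y) = H x + H y"
    and smult: "\<And>c x. x \<in> A \<Longrightarrow> H (smult_pm c x) = s c (H x)"
    and single: "\<And>k. k \<in> Poly_Mapping.keys p \<Longrightarrow> Poly_Mapping.single k 1 \<in> A"
  shows "H p =
    (\<Sum>k\<in>Poly_Mapping.keys p. s (Poly_Mapping.lookup p k) (H (Poly_Mapping.single k 1)))"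
proof -
  have single_in: "Poly_Mapping.single k c \<in> A" if "k \<in> Poly_Mapping.keys p" for k c
    using smult_closed[OF single[OF that], of c] by simp
  have H_single: "H (Poly_Mapping.single k c) = s c (H (Poly_Mapping.single k 1))"
    if "k \<in> Poly_Mapping.keys p" for k c
    using smult[OF single[OF that], of c] by simp
  have "H p = H (\<Sum>k\<in>Poly_Mapping.keys p. Poly_Mapping.single k (Poly_Mapping.lookup p k))"
    by (simp add: sum_single_lookup)
  also have "\<dots> = (\<Sum>k\<in>Poly_Mapping.keys p. H (Poly_Mapping.single k (Poly_Mapping.lookup p k)))"
    using additive_on_sum[OF zero add_closed add, of "Poly_Mapping.keys p"
        "\<lambda>k. Poly_Mapping.single k (Poly_Mapping.lookup p k)"] single_in by blast
  also have "\<dots> =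
      (\<Sum>k\<in>Poly_Mapping.keys p. s (Poly_Mapping.lookup p k) (H (Poly_Mapping.single k 1)))"
    by (rule sum.cong[OF refl H_single])
  finally show ?thesis .
qed

lemma trialgebra_homD:
  assumes "trialgebra_hom s1 C1 m1 d1 s2 C2 m2 d2 h"
  shows "x \<in> C1 \<Longrightarrow> y \<in> C1 \<Longrightarrow> h (x + y) = h x + h y"
    and "x \<in> C1 \<Longrightarrow> h (s1 c x) = s2 c (h x)"
    and "x \<in> C1 \<Longrightarrow> y \<in> C1 \<Longrightarrow> h (m1 x y) = m2 (h x) (h y)"
    and "x \<in> C1 \<Longrightarrow> y \<in> C1 \<Longrightarrow> h (d1 x y) = d2 (h x) (h y)"
  using assms unfolding trialgebra_hom_def by blast+

lemma trialgebra_hom_expansion: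
  assumes "trialgebra_hom smult_pm tri_carrier tri_star tri_bullet s C m d H"
    and "p \<in> tri_carrier"
  shows "H p =
    (\<Sum>k\<in>Poly_Mapping.keys p. s (Poly_Mapping.lookup p k) (H (Poly_Mapping.single k 1)))"
proof (rule linear_expansion[where A = tri_carrier])
  show "0 \<in> tri_carrier"
    by (simp add: tri_carrier_iff)
  show "Poly_Mapping.single k 1 \<in> tri_carrier" if "k \<in> Poly_Mapping.keys p" for k
    using assms(2) that by (simp add: tri_carrier_iff)
qed (use assms(1) in
    \<open>simp_all add: add_in_tri_carrier smult_pm_in_tri_carrier trialgebra_homD(1,2)\<close>)

lemma trialgebra_hom_single_star_gen:
  assumes "trialgebra_hom smult_pm tri_carrier tri_star tri_bullet s C m d H" and "a \<noteq> 0"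
  shows "H (Poly_Mapping.single (a, n + Poly_Mapping.single b 1) 1)
    = m (H (Poly_Mapping.single (a, n) 1)) (H (tri_gen b))"
proof -
  have eq: "Poly_Mapping.single (a, n + Poly_Mapping.single b 1) 1
      = tri_star (Poly_Mapping.single (a, n) 1) (tri_gen b)"
    by (simp add: tri_star_def bilin_ext_single_single)
  show ?thesis
    unfolding eq
    by (rule trialgebra_homD(3)[OF assms(1)]) (simp_all add: single_in_tri_carrier assms(2))
qed

lemma trialgebra_hom_single_bullet_gen:
  assumes "trialgebra_hom smult_pm tri_carrier tri_star tri_bullet s C m d H" and "a \<noteq> 0"
  shows "H (Poly_Mapping.single (a + Poly_Mapping.single b 1, 0) 1)
    = d (H (Poly_Mapping.single (a, 0) 1)) (H (tri_gen b))"
proof -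
  have eq: "Poly_Mapping.single (a + Poly_Mapping.single b 1, 0) 1
      = tri_bullet (Poly_Mapping.single (a, 0) 1) (tri_gen b)"
    by (simp add: tri_bullet_def bilin_ext_single_single)
  show ?thesis
    unfolding eq
    by (rule trialgebra_homD(4)[OF assms(1)]) (simp_all add: single_in_tri_carrier assms(2))
qed

lemma trialgebra_hom_eq_on_monomials:
  assumes H: "trialgebra_hom smult_pm tri_carrier tri_star tri_bullet s C m d H"
    and H': "trialgebra_hom smult_pm tri_carrier tri_star tri_bullet s C m d H'"
    and gen: "\<And>b. H (tri_gen b) = H' (tri_gen b)"
    and "a \<noteq> 0"
  shows "H (Poly_Mapping.single (a, n) 1) = H' (Poly_Mapping.single (a, n) 1)"
proof -
  have base: "a \<noteq> 0 \<longrightarrow> H (Poly_Mapping.single (a, 0) 1) = H' (Poly_Mapping.single (a, 0) 1)"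
    for a
  proof (induction a rule: poly_mapping_nat_induct)
    case (add_single a b)
    show ?case
    proof (cases "a = 0")
      case True
      then show ?thesis using gen by simp
    next
      case False
      then show ?thesis
        using add_single.IH gen
        by (simp only: trialgebra_hom_single_bullet_gen[OF H False]
            trialgebra_hom_single_bullet_gen[OF H' False]) simp
    qed
  qed simp
  show ?thesis
  proof (induction n rule: poly_mapping_nat_induct)
    case (add_single n b)
    show ?case
      using add_single.IH gen
      by (simp only: trialgebra_hom_single_star_gen[OF H \<open>a \<noteq> 0\<close>]
          trialgebra_hom_single_star_gen[OF H' \<open>a \<noteq> 0\<close>])
  qed (use base \<open>a \<noteq> 0\<close> in simp)
qed

lemma trialgebra_hom_unique:
  assumes H: "trialgebra_hom smult_pm tri_carrier tri_star tri_bullet s C m d H"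
    and H': "trialgebra_hom smult_pm tri_carrier tri_star tri_bullet s C m d H'"
    and gen: "\<And>b. H (tri_gen b) = H' (tri_gen b)"
    and p: "p \<in> tri_carrier"
  shows "H p = H' p"
  using trialgebra_hom_expansion[OF H p] trialgebra_hom_expansion[OF H' p] p
    trialgebra_hom_eq_on_monomials[OF H H' gen]
  by (auto simp: tri_carrier_iff intro!: sum.cong)

subsection \<open>Evaluating monomials in a commutative trialgebra\<close>

lemma bilinear_onD:
  assumes "bilinear_on s C M"
  shows "x \<in> C \<Longrightarrow> y \<in> C \<Longrightarrow> z \<in> C \<Longrightarrow> M (x + y) z = M x z + M y z"
    and "x \<in> C \<Longrightarrow> y \<in> C \<Longrightarrow> z \<in> C \<Longrightarrow> M x (y + z) = M x y + M x z"
    and "x \<in> C \<Longrightarrow> y \<in> C \<Longrightarrow> M (s c x) y = s c (M x y)"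
    and "x \<in> C \<Longrightarrow> y \<in> C \<Longrightarrow> M x (s c y) = s c (M x y)"
  using assms unfolding bilinear_on_def by blast+

locale trialgebra_generators =
  fixes s :: "'k::comm_ring_1 \<Rightarrow> 't::ab_group_add \<Rightarrow> 't" and C :: "'t set"
    and m d :: "'t \<Rightarrow> 't \<Rightarrow> 't" and e :: "'b \<Rightarrow> 't"
  assumes trialgebra: "comm_trialgebra s C m d" and gen_in_carrier: "e b \<in> C"
begin

lemma smult_add_left: "x \<in> C \<Longrightarrow> s (a + b) x = s a x + s b x"
  and smult_smult: "x \<in> C \<Longrightarrow> s a (s b x) = s (a * b) x"
  and smult_one: "x \<in> C \<Longrightarrow> s 1 x = x"
  and smult_add_right: "x \<in> C \<Longrightarrow> y \<in> C \<Longrightarrow> s a (x + y) = s a x + s a y"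
  and zero_in_carrier: "0 \<in> C"
  and add_in_carrier: "x \<in> C \<Longrightarrow> y \<in> C \<Longrightarrow> x + y \<in> C"
  and smult_in_carrier: "x \<in> C \<Longrightarrow> s c x \<in> C"
  and star_in_carrier: "x \<in> C \<Longrightarrow> y \<in> C \<Longrightarrow> m x y \<in> C"
  and bullet_in_carrier: "x \<in> C \<Longrightarrow> y \<in> C \<Longrightarrow> d x y \<in> C"
  and star_bilinear: "bilinear_on s C m"
  and bullet_bilinear: "bilinear_on s C d"
  and star_assoc: "x \<in> C \<Longrightarrow> y \<in> C \<Longrightarrow> z \<in> C \<Longrightarrow> m (m x y) z = m x (m y z)"
  and star_right_commute: "x \<in> C \<Longrightarrow> y \<in> C \<Longrightarrow> z \<in> C \<Longrightarrow> m x (m y z) = m x (m z y)"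
  and bullet_commute: "x \<in> C \<Longrightarrow> y \<in> C \<Longrightarrow> d x y = d y x"
  and bullet_assoc: "x \<in> C \<Longrightarrow> y \<in> C \<Longrightarrow> z \<in> C \<Longrightarrow> d (d x y) z = d x (d y z)"
  and star_bullet_right: "x \<in> C \<Longrightarrow> y \<in> C \<Longrightarrow> z \<in> C \<Longrightarrow> m x (d y z) = m x (m y z)"
  and bullet_star_assoc: "x \<in> C \<Longrightarrow> y \<in> C \<Longrightarrow> z \<in> C \<Longrightarrow> m (d x y) z = d x (m y z)"
  using trialgebra unfolding comm_trialgebra_def by blast+

lemma smult_zero_left: "x \<in> C \<Longrightarrow> s 0 x = 0"
  using smult_add_left[of x 0 0] by simp

lemma smult_zero_right: "s a 0 = 0"
  using smult_add_right[OF zero_in_carrier zero_in_carrier, of a] by simp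

lemma sum_in_carrier: "(\<And>i. i \<in> I \<Longrightarrow> x i \<in> C) \<Longrightarrow> sum x I \<in> C"
  by (induction I rule: infinite_finite_induct) (auto simp: zero_in_carrier add_in_carrier)

lemma smult_sum:
  "(\<And>i. i \<in> I \<Longrightarrow> x i \<in> C) \<Longrightarrow> s a (sum x I) = (\<Sum>i\<in>I. s a (x i))"
  by (induction I rule: infinite_finite_induct)
    (auto simp: smult_zero_right smult_add_right sum_in_carrier)

lemma bilinear_zero:
  assumes "bilinear_on s C M" and "x \<in> C"
  shows "M 0 x = 0" and "M x 0 = 0"
  using bilinear_onD(1)[OF assms(1) zero_in_carrier zero_in_carrier assms(2)]
    bilinear_onD(2)[OF assms(1) assms(2) zero_in_carrier zero_in_carrier] by simp_all

lemma bilinear_sum_left: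
  assumes "bilinear_on s C M" and "\<And>i. i \<in> I \<Longrightarrow> x i \<in> C" and "y \<in> C"
  shows "M (sum x I) y = (\<Sum>i\<in>I. M (x i) y)"
  using assms(2) by (induction I rule: infinite_finite_induct)
    (simp_all add: bilinear_zero[OF assms(1,3)] bilinear_onD(1)[OF assms(1)] sum_in_carrier
      assms(3))

lemma bilinear_sum_right:
  assumes "bilinear_on s C M" and "\<And>i. i \<in> I \<Longrightarrow> y i \<in> C" and "x \<in> C"
  shows "M x (sum y I) = (\<Sum>i\<in>I. M x (y i))"
  using assms(2) by (induction I rule: infinite_finite_induct)
    (simp_all add: bilinear_zero[OF assms(1,3)] bilinear_onD(2)[OF assms(1)] sum_in_carrier
      assms(3))

text \<open>The \<bullet>-product of a nonempty word of generators is folded in \<^typ>\<open>'t option\<close>,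
  where \<^const>\<open>None\<close> serves as an adjoined unit; the guards \<open>x \<in> C\<close> make the steps
  commute on the whole type, as \<^locale>\<open>comp_fun_commute\<close> requires.\<close>

definition bullet_step :: "'b \<Rightarrow> 't option \<Rightarrow> 't option" where
  "bullet_step b z =
     Some (case z of None \<Rightarrow> e b | Some x \<Rightarrow> if x \<in> C then d x (e b) else x)"

definition star_step :: "'b \<Rightarrow> 't \<Rightarrow> 't" where
  "star_step b x = (if x \<in> C then m x (e b) else x)"

lemma bullet_step_None [simp]: "bullet_step b None = Some (e b)"
  by (simp add: bullet_step_def)

lemma bullet_step_Some [simp]: "x \<in> C \<Longrightarrow> bullet_step b (Some x) = Some (d x (e b))"
  by (simp add: bullet_step_def)

lemma star_step_eq [simp]: "x \<in> C \<Longrightarrow> star_step b x = m x (e b)"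
  by (simp add: star_step_def)

lemma comp_fun_commute_bullet_step: "comp_fun_commute bullet_step"
proof
  fix b b'
  have "bullet_step b' (bullet_step b z) = bullet_step b (bullet_step b' z)" for z
  proof (cases z)
    case None
    then show ?thesis using gen_in_carrier by (simp add: bullet_commute)
  next
    case (Some x)
    have "x \<in> C \<Longrightarrow> d (d x (e b)) (e b') = d (d x (e b')) (e b)"
      using gen_in_carrier by (metis bullet_assoc bullet_commute)
    then show ?thesis
      using Some gen_in_carrier by (simp add: bullet_step_def bullet_in_carrier)
  qed
  then show "bullet_step b' \<circ> bullet_step b = bullet_step b \<circ> bullet_step b'"
    by auto
qed

lemma comp_fun_commute_star_step: "comp_fun_commute star_step"
proof
  fix b b'
  have "star_step b' (star_step b x) = star_step b (star_step b' x)" for x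
    using gen_in_carrier
    by (simp add: star_step_def star_in_carrier star_assoc star_right_commute)
  then show "star_step b' \<circ> star_step b = star_step b \<circ> star_step b'"
    by auto
qed

lemmas fold_bullet_step_add_mset =
  comp_fun_commute.fold_mset_add_mset[OF comp_fun_commute_bullet_step]
lemmas fold_bullet_step_union = comp_fun_commute.fold_mset_union[OF comp_fun_commute_bullet_step]
lemmas fold_star_step_add_mset = comp_fun_commute.fold_mset_add_mset[OF comp_fun_commute_star_step]
lemmas fold_star_step_union = comp_fun_commute.fold_mset_union[OF comp_fun_commute_star_step]

definition bullet_prod :: "'b multiset \<Rightarrow> 't" where
  "bullet_prod M = the (fold_mset bullet_step None M)"

definition star_prod :: "'t \<Rightarrow> 'b multiset \<Rightarrow> 't" where
  "star_prod x N = fold_mset star_step x N"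

lemma fold_bullet_step_None:
  "M \<noteq> {#} \<Longrightarrow> fold_mset bullet_step None M = Some (bullet_prod M) \<and> bullet_prod M \<in> C"
proof (induction M)
  case (add b M)
  show ?case
  proof (cases "M = {#}")
    case True
    then show ?thesis using gen_in_carrier by (simp add: bullet_prod_def)
  next
    case False
    with add.IH have IH: "fold_mset bullet_step None M = Some (bullet_prod M)"
      "bullet_prod M \<in> C" by auto
    then have "fold_mset bullet_step None (add_mset b M) = Some (d (bullet_prod M) (e b))"
      by (simp add: fold_bullet_step_add_mset)
    then show ?thesis
      using IH(2) gen_in_carrier
      by (simp add: bullet_prod_def[of "add_mset b M"] bullet_in_carrier)
  qed
qed simp

lemma bullet_prod_in_carrier: "M \<noteq> {#} \<Longrightarrow> bullet_prod M \<in> C"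
  using fold_bullet_step_None by blast

lemma bullet_prod_singleton: "bullet_prod {#b#} = e b"
  by (simp add: bullet_prod_def)

lemma fold_bullet_step_Some:
  "x \<in> C \<Longrightarrow> N \<noteq> {#} \<Longrightarrow> fold_mset bullet_step (Some x) N = Some (d x (bullet_prod N))"
proof (induction N)
  case (add b N)
  show ?case
  proof (cases "N = {#}")
    case True
    then show ?thesis using add.prems by (simp add: bullet_prod_singleton)
  next
    case False
    have "bullet_prod (add_mset b N) = d (bullet_prod N) (e b)"
      using fold_bullet_step_None[OF False]
      by (simp add: bullet_prod_def[of "add_mset b N"] fold_bullet_step_add_mset)
    then show ?thesis
      using add False gen_in_carrier bullet_prod_in_carrier
      by (simp add: fold_bullet_step_add_mset bullet_in_carrier bullet_assoc)
  qed
qed simp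

lemma bullet_prod_union:
  assumes "M \<noteq> {#}" and "N \<noteq> {#}"
  shows "bullet_prod (M + N) = d (bullet_prod M) (bullet_prod N)"
  using fold_bullet_step_None[OF assms(1)] fold_bullet_step_Some[OF _ assms(2)]
  by (simp add: bullet_prod_def[of "M + N"] fold_bullet_step_union)

lemma star_prod_in_carrier: "x \<in> C \<Longrightarrow> star_prod x N \<in> C"
  unfolding star_prod_def
  by (induction N) (simp_all add: fold_star_step_add_mset star_in_carrier gen_in_carrier)

lemma star_prod_union: "star_prod x (M + N) = star_prod (star_prod x M) N"
  unfolding star_prod_def by (rule fold_star_step_union)

lemma star_star_prod: "a \<in> C \<Longrightarrow> x \<in> C \<Longrightarrow> m a (star_prod x N) = star_prod (m a x) N"
proof (induction N)
  case (add b N)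
  then show ?case
    using star_prod_in_carrier gen_in_carrier
    by (simp add: star_prod_def fold_star_step_add_mset star_in_carrier flip: star_assoc)
qed (simp add: star_prod_def)

lemma bullet_star_prod: "x \<in> C \<Longrightarrow> y \<in> C \<Longrightarrow> d x (star_prod y N) = star_prod (d x y) N"
proof (induction N)
  case (add b N)
  then show ?case
    using star_prod_in_carrier gen_in_carrier
    by (simp add: star_prod_def fold_star_step_add_mset star_in_carrier bullet_in_carrier
        flip: bullet_star_assoc)
qed (simp add: star_prod_def)

lemma star_bullet_prod: "a \<in> C \<Longrightarrow> M \<noteq> {#} \<Longrightarrow> m a (bullet_prod M) = star_prod a M"
proof (induction M)
  case (add b M)
  show ?case
  proof (cases "M = {#}")
    case True
    then show ?thesis using add.prems by (simp add: bullet_prod_singleton star_prod_def)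
  next
    case False
    have "m a (bullet_prod (add_mset b M)) = m a (d (bullet_prod M) (e b))"
      using bullet_prod_union[OF False, of "{#b#}"] by (simp add: bullet_prod_singleton)
    also have "\<dots> = m (m a (bullet_prod M)) (e b)"
      using add.prems False bullet_prod_in_carrier gen_in_carrier
      by (simp add: star_bullet_right star_assoc)
    also have "\<dots> = star_prod a (add_mset b M)"
      using add False star_prod_in_carrier by (simp add: star_prod_def fold_star_step_add_mset)
    finally show ?thesis .
  qed
qed simp

text \<open>The value of \<open>x\<^sup>a \<otimes> y\<^sup>n\<close>; pairs with \<open>a = 0\<close> index no monomial of the model
  and get the junk value 0.\<close>

definition mono_value :: "('b \<Rightarrow>\<^sub>0 nat) \<times> ('b \<Rightarrow>\<^sub>0 nat) \<Rightarrow> 't" where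
  "mono_value k =
     (if fst k = 0 then 0 else star_prod (bullet_prod (pm_mset (fst k))) (pm_mset (snd k)))"

lemma mono_value_in_carrier: "mono_value k \<in> C"
  by (simp add: mono_value_def zero_in_carrier star_prod_in_carrier bullet_prod_in_carrier)

lemma mono_value_gen: "mono_value (Poly_Mapping.single b 1, 0) = e b"
  by (simp add: mono_value_def bullet_prod_singleton star_prod_def del: One_nat_def)

lemma mono_value_star:
  assumes "a \<noteq> 0" and "a' \<noteq> 0"
  shows "mono_value (a, n + a' + n') = m (mono_value (a, n)) (mono_value (a', n'))"
  using assms bullet_prod_in_carrier[of "pm_mset a"] bullet_prod_in_carrier[of "pm_mset a'"]
  by (simp add: mono_value_def star_prod_union star_star_prod star_bullet_prod
      star_prod_in_carrier)

lemma mono_value_bullet: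
  assumes "a \<noteq> 0" and "a' \<noteq> 0"
  shows "mono_value (a + a', n + n') = d (mono_value (a, n)) (mono_value (a', n'))"
proof -
  let ?x = "bullet_prod (pm_mset a)" and ?y = "bullet_prod (pm_mset a')"
  have xy: "?x \<in> C" "?y \<in> C"
    using assms by (simp_all add: bullet_prod_in_carrier)
  have "d (mono_value (a, n)) (mono_value (a', n'))
      = star_prod (d (star_prod ?x (pm_mset n)) ?y) (pm_mset n')"
    using assms xy by (simp add: mono_value_def bullet_star_prod star_prod_in_carrier)
  also have "\<dots> = star_prod (star_prod (d ?y ?x) (pm_mset n)) (pm_mset n')"
    using xy by (simp add: bullet_commute star_prod_in_carrier bullet_star_prod)
  also have "\<dots> = mono_value (a + a', n + n')"
    using assms xy by (simp add: mono_value_def bullet_prod_union bullet_commute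
        poly_mapping_nat_add_eq_0_iff star_prod_union)
  finally show ?thesis ..
qed

definition free_ext :: "('b, 'k) tri \<Rightarrow> 't" where
  "free_ext p = (\<Sum>k\<in>Poly_Mapping.keys p. s (Poly_Mapping.lookup p k) (mono_value k))"

lemma free_ext_eq_sum_superset:
  "finite S \<Longrightarrow> Poly_Mapping.keys p \<subseteq> S \<Longrightarrow>
     free_ext p = (\<Sum>k\<in>S. s (Poly_Mapping.lookup p k) (mono_value k))"
  unfolding free_ext_def
  by (rule sum.mono_neutral_left) (auto simp: in_keys_iff smult_zero_left mono_value_in_carrier)

lemma free_ext_in_carrier: "free_ext p \<in> C"
  unfolding free_ext_def by (intro sum_in_carrier smult_in_carrier mono_value_in_carrier)

lemma free_ext_add: "free_ext (p + q) = free_ext p + free_ext q"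
  by (subst (1 2 3) free_ext_eq_sum_superset[where S = "Poly_Mapping.keys p \<union> Poly_Mapping.keys q
      \<union> Poly_Mapping.keys (p + q)"])
    (auto simp: lookup_add smult_add_left mono_value_in_carrier sum.distrib)

lemma free_ext_smult: "free_ext (smult_pm c p) = s c (free_ext p)"
  by (subst (1 2) free_ext_eq_sum_superset[where S = "Poly_Mapping.keys p"])
    (auto simp: keys_smult_pm_subset smult_sum smult_in_carrier mono_value_in_carrier smult_smult)

lemma free_ext_single: "free_ext (Poly_Mapping.single k c) = s c (mono_value k)"
  by (subst free_ext_eq_sum_superset[where S = "{k}"]) auto

lemma free_ext_sum: "free_ext (sum F I) = (\<Sum>i\<in>I. free_ext (F i))"
  by (induction I rule: infinite_finite_induct) (simp_all add: free_ext_add free_ext_def[of 0])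

lemma free_ext_tri_gen: "free_ext (tri_gen b) = e b"
  using smult_one gen_in_carrier by (simp add: free_ext_single mono_value_gen del: One_nat_def)

lemma free_ext_tri_incl:
  "free_ext (tri_incl v) = (\<Sum>b\<in>Poly_Mapping.keys v. s (Poly_Mapping.lookup v b) (e b))"
  unfolding tri_incl_def free_ext_sum free_ext_single mono_value_gen ..

lemma free_ext_bilin_ext:
  assumes M: "bilinear_on s C M" and M_closed: "\<And>x y. x \<in> C \<Longrightarrow> y \<in> C \<Longrightarrow> M x y \<in> C"
    and mono_value_mult: "\<And>a b. fst a \<noteq> 0 \<Longrightarrow> fst b \<noteq> 0 \<Longrightarrow>
      mono_value (f a b) = M (mono_value a) (mono_value b)"
    and "p \<in> tri_carrier" "q \<in> tri_carrier"
  shows "free_ext (bilin_ext f p q) = M (free_ext p) (free_ext q)"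
proof -
  let ?p = "Poly_Mapping.lookup p" and ?q = "Poly_Mapping.lookup q"
  have "free_ext (bilin_ext f p q) = (\<Sum>a\<in>Poly_Mapping.keys p. \<Sum>b\<in>Poly_Mapping.keys q.
      s (?p a * ?q b) (M (mono_value a) (mono_value b)))"
    unfolding bilin_ext_def free_ext_sum free_ext_single
    using assms(4,5) by (intro sum.cong refl) (simp add: tri_carrier_iff mono_value_mult)
  also have "\<dots> = (\<Sum>a\<in>Poly_Mapping.keys p. \<Sum>b\<in>Poly_Mapping.keys q.
      M (s (?p a) (mono_value a)) (s (?q b) (mono_value b)))"
    by (intro sum.cong refl) (simp add: bilinear_onD(3,4)[OF M] smult_smult M_closed
        smult_in_carrier mono_value_in_carrier mult.commute)
  also have "\<dots> = M (free_ext p) (free_ext q)"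
    unfolding free_ext_def
    by (simp add: bilinear_sum_left[OF M] bilinear_sum_right[OF M] sum_in_carrier smult_in_carrier
        mono_value_in_carrier) (rule sum.swap)
  finally show ?thesis .
qed

lemma free_ext_hom: "trialgebra_hom smult_pm tri_carrier tri_star tri_bullet s C m d free_ext"
proof -
  have "free_ext (tri_star p q) = m (free_ext p) (free_ext q)"
    if "p \<in> tri_carrier" "q \<in> tri_carrier" for p q
    unfolding tri_star_def
    by (rule free_ext_bilin_ext[OF star_bilinear star_in_carrier _ that])
      (auto simp: mono_value_star)
  moreover have "free_ext (tri_bullet p q) = d (free_ext p) (free_ext q)"
    if "p \<in> tri_carrier" "q \<in> tri_carrier" for p q
    unfolding tri_bullet_def
    by (rule free_ext_bilin_ext[OF bullet_bilinear bullet_in_carrier _ that])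
      (auto simp: mono_value_bullet)
  ultimately show ?thesis
    unfolding trialgebra_hom_def by (simp add: free_ext_in_carrier free_ext_add free_ext_smult)
qed

end

lemma free_comm_trialgebra_universal:
  fixes f :: "('b \<Rightarrow>\<^sub>0 'k::comm_ring_1) \<Rightarrow> 't::ab_group_add"
  assumes trialgebra: "comm_trialgebra s C m d" and f_in_carrier: "\<And>v. f v \<in> C"
    and f_add: "\<And>u v. f (u + v) = f u + f v" and f_smult: "\<And>c v. f (smult_pm c v) = s c (f v)"
  obtains g where "trialgebra_hom smult_pm tri_carrier tri_star tri_bullet s C m d g"
    and "\<And>v. g (tri_incl v) = f v"
    and "\<And>h x. trialgebra_hom smult_pm tri_carrier tri_star tri_bullet s C m d h \<Longrightarrow>
      (\<And>v. h (tri_incl v) = f v) \<Longrightarrow> x \<in> tri_carrier \<Longrightarrow> h x = g x"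
proof -
  define e where "e b = f (Poly_Mapping.single b 1)" for b
  interpret trialgebra_generators s C m d e
    using trialgebra f_in_carrier by unfold_locales (simp_all add: e_def)
  have f_expansion: "f v = (\<Sum>b\<in>Poly_Mapping.keys v. s (Poly_Mapping.lookup v b) (e b))" for v
    unfolding e_def by (rule linear_expansion[where A = UNIV]) (simp_all add: f_add f_smult)
  show ?thesis
  proof
    show "trialgebra_hom smult_pm tri_carrier tri_star tri_bullet s C m d free_ext"
      by (rule free_ext_hom)
    show "free_ext (tri_incl v) = f v" for v
      by (simp add: free_ext_tri_incl f_expansion)
    fix h :: "('b, 'k) tri \<Rightarrow> 't" and x :: "('b, 'k) tri"
    assume h: "trialgebra_hom smult_pm tri_carrier tri_star tri_bullet s C m d h"
      and h_incl: "\<And>v. h (tri_incl v) = f v" and x: "x \<in> tri_carrier"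
    have "h (tri_gen b) = free_ext (tri_gen b)" for b
      using h_incl[of "Poly_Mapping.single b 1"]
      by (simp only: tri_incl_single free_ext_tri_gen e_def)
    then show "h x = free_ext x"
      by (rule trialgebra_hom_unique[OF h free_ext_hom _ x])
  qed
qed

theorem mainTheorem12:
  fixes s :: "'k::field_char_0 \<Rightarrow> 't::ab_group_add \<Rightarrow> 't"
    and C :: "'t set" and m d :: "'t \<Rightarrow> 't \<Rightarrow> 't"
    and f :: "('b \<Rightarrow>\<^sub>0 'k) \<Rightarrow> 't"
  shows "comm_trialgebra (smult_pm :: 'k \<Rightarrow> ('b, 'k) tri \<Rightarrow> ('b, 'k) tri) tri_carrier tri_star tri_bullet
    \<and> inj (tri_incl :: ('b \<Rightarrow>\<^sub>0 'k) \<Rightarrow> ('b, 'k) tri)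
    \<and> (\<forall>v. tri_incl v \<in> (tri_carrier :: ('b, 'k) tri set))
    \<and> (\<forall>u v. tri_incl (u + v) = (tri_incl u + tri_incl v :: ('b, 'k) tri))
    \<and> (\<forall>c v. tri_incl (smult_pm c v) = (smult_pm c (tri_incl v) :: ('b, 'k) tri))
    \<and> (comm_trialgebra s C m d \<and> (\<forall>v. f v \<in> C) \<and> (\<forall>u v. f (u + v) = f u + f v)
         \<and> (\<forall>c v. f (smult_pm c v) = s c (f v))
       \<longrightarrow> (\<exists>g :: ('b, 'k) tri \<Rightarrow> 't.
             trialgebra_hom smult_pm tri_carrier tri_star tri_bullet s C m d g
             \<and> (\<forall>v. g (tri_incl v) = f v)
             \<and> (\<forall>h :: ('b, 'k) tri \<Rightarrow> 't.
                  trialgebra_hom smult_pm tri_carrier tri_star tri_bullet s C m d h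
                  \<and> (\<forall>v. h (tri_incl v) = f v)
                  \<longrightarrow> (\<forall>x \<in> tri_carrier. h x = g x))))"
  by (intro conjI allI impI comm_trialgebra_tri inj_tri_incl tri_incl_in_tri_carrier tri_incl_add
      tri_incl_smult) (elim conjE free_comm_trialgebra_universal[where f = f]; blast)

end
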